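(* For any eviction algorithm $\mathcal Q$ and any input (and, if $\mathcal Q$ is randomized, any realization of its random bits) there exists an eviction graph $H_{\mathcal Q}$ with edge set $E$ such that $$\mathrm{OBJ}_{\mathcal Q}\le \mathrm{OPT}+|E|.$$
   Context: Caching setting: cache of capacity $k$, requests $\sigma(1),\dots,\sigma(T)$ processed online starting from an empty cache; on a hit nothing happens, on a miss the page is loaded and, if the cache is full, one cached page is evicted first. $\mathrm{OBJ}_{\mathcal Q}$ is the number of misses of $\mathcal Q$; $\mathrm{OPT}$ is the number of misses of Belady's optimal offline algorithm (evicts the cached page whose next request is furthest in the future). $\nu(t)=\min\{s>t:\sigma(s)=\sigma(t)\}$ ($T+1$ if none). Cached pages are identified by the index of their most recent request: $\mathcal I_{\mathcal Q}(t)$ is the set of indices $\max\{t'\le t:\sigma(t')=s\}$ over pages $s$ cached after processing request $t$. An eviction graph $H_{\mathcal Q}$ is a directed graph on vertex set $\{1,\dots,T\}$ such that for every edge $(i,j)$ there is a time $t+1$ at which $\mathcal Q$ evicts $\sigma(j)$ with $j\in\mathcal I_{\mathcal Q}(t)$ while $i\in\mathcal I_{\mathcal Q}(t)$ and $\nu(i)>\nu(j)$; moreover for each $j$ there is at most one edge of the form $(i,j)$. *)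

theory Defs
  imports Main
begin

text \<open>Requests are sigma 1, ..., sigma T.  A run of a caching algorithm on this input
 (with fixed random bits) is the sequence of cache contents C t after processing request t,
 C 0 = {} being the initial empty cache.\<close>

definition miss :: "(nat \<Rightarrow> 'p) \<Rightarrow> (nat \<Rightarrow> 'p set) \<Rightarrow> nat \<Rightarrow> bool" where
  "miss \<sigma> C t \<longleftrightarrow> \<sigma> t \<notin> C (t - 1)"

definition valid_run :: "nat \<Rightarrow> nat \<Rightarrow> (nat \<Rightarrow> 'p) \<Rightarrow> (nat \<Rightarrow> 'p set) \<Rightarrow> bool" where
  "valid_run k T \<sigma> C \<longleftrightarrow> C 0 = {} \<and>
     (\<forall>t\<in>{1..T}.
        (\<sigma> t \<in> C (t - 1) \<longrightarrow> C t = C (t - 1)) \<and>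
        (\<sigma> t \<notin> C (t - 1) \<and> card (C (t - 1)) < k \<longrightarrow> C t = insert (\<sigma> t) (C (t - 1))) \<and>
        (\<sigma> t \<notin> C (t - 1) \<and> \<not> card (C (t - 1)) < k \<longrightarrow>
            (\<exists>e\<in>C (t - 1). C t = insert (\<sigma> t) (C (t - 1) - {e}))))"

definition num_misses :: "nat \<Rightarrow> (nat \<Rightarrow> 'p) \<Rightarrow> (nat \<Rightarrow> 'p set) \<Rightarrow> nat" where
  "num_misses T \<sigma> C = card {t\<in>{1..T}. miss \<sigma> C t}"

definition next_req :: "nat \<Rightarrow> (nat \<Rightarrow> 'p) \<Rightarrow> nat \<Rightarrow> 'p \<Rightarrow> nat" where
  "next_req T \<sigma> t p = (if \<exists>s. t < s \<and> s \<le> T \<and> \<sigma> s = p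
                         then (LEAST s. t < s \<and> s \<le> T \<and> \<sigma> s = p) else T + 1)"

definition nu :: "nat \<Rightarrow> (nat \<Rightarrow> 'p) \<Rightarrow> nat \<Rightarrow> nat" where
  "nu T \<sigma> t = next_req T \<sigma> t (\<sigma> t)"

definition belady_run :: "nat \<Rightarrow> nat \<Rightarrow> (nat \<Rightarrow> 'p) \<Rightarrow> (nat \<Rightarrow> 'p set) \<Rightarrow> bool" where
  "belady_run k T \<sigma> B \<longleftrightarrow> valid_run k T \<sigma> B \<and>
     (\<forall>t\<in>{1..T}. \<forall>e\<in>B (t - 1). e \<notin> B t \<longrightarrow>
        (\<forall>q\<in>B (t - 1). next_req T \<sigma> t q \<le> next_req T \<sigma> t e))"

definition last_req :: "(nat \<Rightarrow> 'p) \<Rightarrow> nat \<Rightarrow> 'p \<Rightarrow> nat" where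
  "last_req \<sigma> t s = Max {t'. 1 \<le> t' \<and> t' \<le> t \<and> \<sigma> t' = s}"

definition cached_idx :: "(nat \<Rightarrow> 'p) \<Rightarrow> (nat \<Rightarrow> 'p set) \<Rightarrow> nat \<Rightarrow> nat set" where
  "cached_idx \<sigma> C t = last_req \<sigma> t ` C t"

definition eviction_graph :: "nat \<Rightarrow> (nat \<Rightarrow> 'p) \<Rightarrow> (nat \<Rightarrow> 'p set) \<Rightarrow> (nat \<times> nat) set \<Rightarrow> bool" where
  "eviction_graph T \<sigma> C E \<longleftrightarrow> E \<subseteq> {1..T} \<times> {1..T} \<and>
     (\<forall>(i, j)\<in>E. \<exists>t. t + 1 \<le> T \<and>
         \<sigma> j \<in> C t \<and> \<sigma> j \<notin> C (t + 1) \<and>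
         j \<in> cached_idx \<sigma> C t \<and> i \<in> cached_idx \<sigma> C t \<and> nu T \<sigma> i > nu T \<sigma> j) \<and>
     (\<forall>i i' j. (i, j) \<in> E \<and> (i', j) \<in> E \<longrightarrow> i = i')"

end

theory Submission
  imports Defs "HOL-Combinatorics.Transposition"
begin

text \<open>Run the algorithm Q and any other run B side by side and keep a bijection g between
  their caches. Call a page x cached by Q an inversion if its partner g x is requested strictly
  before x. Then (misses of Q so far) + (inversions) never exceeds (misses of B so far) + (number
  of steps at which Q evicted a page that was not the cached page requested furthest in the future):
  after each request the bijection can be repaired so that the requested page is matched with
  itself, and a miss of Q that B does not pay for is paid for by an inversion that disappears.
  Each such early eviction gives an eviction-graph edge from the last request of a page requested
  later to the last request of the evicted page, and different steps give different targets,
  because an evicted page must be requested again before it can be evicted again.\<close>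

definition inversions :: "('p \<Rightarrow> 'p) \<Rightarrow> ('p \<Rightarrow> nat) \<Rightarrow> 'p set \<Rightarrow> nat" where
  "inversions g nx A = card {x \<in> A. nx (g x) < nx x}"

lemma card_filter_insert:
  assumes "finite A" "a \<notin> A"
  shows "card {x \<in> insert a A. P x} = card {x \<in> A. P x} + of_bool (P a)"
proof -
  have "{x \<in> insert a A. P x} = (if P a then insert a {x \<in> A. P x} else {x \<in> A. P x})"
    by auto
  then show ?thesis using assms by simp
qed

lemma card_filter_atLeastAtMost_Suc:
  "card {s \<in> {1..Suc t}. P s} = card {s \<in> {1..t}. P s} + of_bool (P (Suc t))"
proof -
  have "card {s \<in> {1..Suc t}. P s} = card {s \<in> insert (Suc t) {1..t}. P s}"
    by (simp add: atLeastAtMostSuc_conv)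
  also have "\<dots> = card {s \<in> {1..t}. P s} + of_bool (P (Suc t))"
    by (rule card_filter_insert) auto
  finally show ?thesis .
qed

lemma bij_betw_remove_pair:
  assumes "bij_betw g A B" "e \<in> A" "q \<in> A"
  shows "bij_betw (g \<circ> transpose e q) (A - {e}) (B - {g q})"
proof (rule bij_betw_trans)
  show "bij_betw (transpose e q) (A - {e}) (A - {q})"
  proof (rule bij_betw_subset[of _ A])
    show "bij_betw (transpose e q) A A" using assms by simp
    have "transpose e q ` (A - {e}) = transpose e q ` A - transpose e q ` {e}"
      by (rule image_set_diff) (rule inj_transpose)
    then show "transpose e q ` (A - {e}) = A - {q}" using assms by simp
  qed auto
  show "bij_betw g (A - {q}) (B - {g q})"
    using bij_betw_DiffI[OF assms(1), of "{q}" "{g q}"] assms(3) bij_betwE[OF assms(1)] by auto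
qed

lemma inversions_remove_pair:
  assumes "finite A" "e \<in> A" "q \<in> A"
  shows "inversions (g \<circ> transpose e q) nx (A - {e}) + of_bool (nx (g q) < nx q)
           \<le> inversions g nx A + of_bool (nx e < nx q)"
proof (cases "q = e")
  case True
  have "inversions g nx (insert e (A - {e})) = inversions g nx (A - {e}) + of_bool (nx (g e) < nx e)"
    unfolding inversions_def by (rule card_filter_insert) (use assms(1) in auto)
  then show ?thesis using True assms(2) by (simp add: insert_absorb)
next
  case False
  define Z where "Z = A - {e, q}"
  have Z: "finite Z" "e \<notin> Z" "q \<notin> Z" using assms by (auto simp: Z_def)
  have A: "A = insert e (insert q Z)" and A': "A - {e} = insert q Z"
    using assms False by (auto simp: Z_def)
  have unchanged: "{x \<in> Z. nx ((g \<circ> transpose e q) x) < nx x} = {x \<in> Z. nx (g x) < nx x}"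
    using Z by (auto simp: transpose_def)
  have "inversions (g \<circ> transpose e q) nx (A - {e})
          = card {x \<in> Z. nx (g x) < nx x} + of_bool (nx (g e) < nx q)"
    unfolding inversions_def A' card_filter_insert[OF Z(1,3)] unchanged by simp
  moreover have "inversions g nx A
          = card {x \<in> Z. nx (g x) < nx x} + of_bool (nx (g q) < nx q) + of_bool (nx (g e) < nx e)"
  proof -
    have "card {x \<in> insert e (insert q Z). nx (g x) < nx x}
            = card {x \<in> insert q Z. nx (g x) < nx x} + of_bool (nx (g e) < nx e)"
      by (rule card_filter_insert) (use Z False in auto)
    then show ?thesis
      unfolding inversions_def A card_filter_insert[OF Z(1,3)] .
  qed
  moreover have "nx (g e) < nx q \<Longrightarrow> nx (g e) < nx e \<or> nx e < nx q"
    by linarith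
  ultimately show ?thesis by (cases "nx (g e) < nx q") auto
qed

lemma bij_betw_extend:
  assumes "bij_betw g A B" "r \<notin> A" "r \<notin> B"
  shows "bij_betw (g(r := r)) (insert r A) (insert r B)"
proof -
  have "bij_betw (g(r := r)) A B"
    using assms by (auto simp: bij_betw_def inj_on_def)
  then show ?thesis using assms(2,3) by (auto simp: bij_betw_def inj_on_def)
qed

lemma inversions_extend:
  assumes "finite A" "r \<notin> A" "r \<notin> g ` A" "\<And>x. x \<noteq> r \<Longrightarrow> nx' x = nx x"
  shows "inversions (g(r := r)) nx' (insert r A) = inversions g nx A"
proof -
  have "{x \<in> A. nx' ((g(r := r)) x) < nx' x} = {x \<in> A. nx (g x) < nx x}"
    using assms by (auto simp: image_iff)
  then show ?thesis unfolding inversions_def card_filter_insert[OF assms(1,2)] by simp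
qed

lemma inversions_repair:
  assumes g: "bij_betw g A B" and A: "finite A" "e \<in> A" and "f \<in> B"
    and r: "r \<notin> A - {e}" "r \<notin> B - {f}" and nx': "\<And>x. x \<noteq> r \<Longrightarrow> nx' x = nx x"
  obtains g' q where "bij_betw g' (insert r (A - {e})) (insert r (B - {f}))" "q \<in> A" "g q = f"
    "inversions g' nx' (insert r (A - {e})) + of_bool (nx f < nx q)
       \<le> inversions g nx A + of_bool (nx e < nx q)"
proof -
  have "f \<in> g ` A" using g \<open>f \<in> B\<close> by (simp add: bij_betw_def)
  then obtain q where q: "q \<in> A" "g q = f" by (metis imageE)
  define h where "h = g \<circ> transpose e q"
  have h: "bij_betw h (A - {e}) (B - {f})"
    using bij_betw_remove_pair[OF g A(2) q(1)] q(2) by (simp add: h_def)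
  then have "r \<notin> h ` (A - {e})" using r by (simp add: bij_betw_def)
  then have "inversions (h(r := r)) nx' (insert r (A - {e})) = inversions h nx (A - {e})"
    by (intro inversions_extend nx') (use A r in auto)
  then have "inversions (h(r := r)) nx' (insert r (A - {e})) + of_bool (nx f < nx q)
               \<le> inversions g nx A + of_bool (nx e < nx q)"
    using inversions_remove_pair[OF A q(1), of g nx] q(2) by (simp add: h_def)
  with bij_betw_extend[OF h r] q show ?thesis by (rule that)
qed

lemma valid_run_step:
  assumes "valid_run k T \<sigma> C" "Suc t \<le> T"
  shows "(\<sigma> (Suc t) \<in> C t \<longrightarrow> C (Suc t) = C t) \<and>
         (\<sigma> (Suc t) \<notin> C t \<and> card (C t) < k \<longrightarrow> C (Suc t) = insert (\<sigma> (Suc t)) (C t)) \<and>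
         (\<sigma> (Suc t) \<notin> C t \<and> \<not> card (C t) < k \<longrightarrow>
            (\<exists>e\<in>C t. C (Suc t) = insert (\<sigma> (Suc t)) (C t - {e})))"
proof -
  have "Suc t \<in> {1..T}" using assms(2) by simp
  with assms(1) show ?thesis unfolding valid_run_def by fastforce
qed

lemma valid_run_step_cases:
  assumes "valid_run k T \<sigma> C" "Suc t \<le> T"
  obtains (insert) "card (C t) < k" "\<sigma> (Suc t) \<notin> C t" "C (Suc t) = insert (\<sigma> (Suc t)) (C t)"
    | (replace) e where "e \<in> C t" "C (Suc t) = insert (\<sigma> (Suc t)) (C t - {e})"
        "\<sigma> (Suc t) \<in> C t \<Longrightarrow> e = \<sigma> (Suc t)" "\<sigma> (Suc t) \<notin> C t \<Longrightarrow> \<not> card (C t) < k"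
proof (cases "\<sigma> (Suc t) \<in> C t")
  case True
  then have "C (Suc t) = insert (\<sigma> (Suc t)) (C t - {\<sigma> (Suc t)})"
    using valid_run_step[OF assms] by auto
  with True show ?thesis using replace by blast
next
  case False
  then show ?thesis using valid_run_step[OF assms] insert replace by blast
qed

lemma valid_run_cache:
  assumes "valid_run k T \<sigma> C" "t \<le> T"
  shows "finite (C t) \<and> C t \<subseteq> \<sigma> ` {1..t} \<and> (card (C t) < k \<longrightarrow> \<sigma> ` {1..t} \<subseteq> C t)"
  using assms(2)
proof (induction t)
  case 0
  then show ?case using assms(1) by (simp add: valid_run_def)
next
  case (Suc t)
  then have IH: "finite (C t)" "C t \<subseteq> \<sigma> ` {1..t}" "card (C t) < k \<longrightarrow> \<sigma> ` {1..t} \<subseteq> C t"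
    by auto
  have requested: "\<sigma> ` {1..Suc t} = insert (\<sigma> (Suc t)) (\<sigma> ` {1..t})"
    by (simp add: atLeastAtMostSuc_conv)
  from assms(1) Suc.prems show ?case
  proof (cases rule: valid_run_step_cases)
    case insert
    then show ?thesis using IH requested by auto
  next
    case (replace e)
    show ?thesis
    proof (cases "\<sigma> (Suc t) \<in> C t")
      case True
      then have "C (Suc t) = C t" using replace by auto
      then show ?thesis using IH requested True by auto
    next
      case False
      have "card (C (Suc t)) = card (C t)"
        using replace False IH(1) card_Suc_Diff1 by fastforce
      then show ?thesis using replace False IH requested by auto
    qed
  qed
qed

lemma valid_run_reenter:
  assumes "valid_run k T \<sigma> C" "b \<le> T" "a \<le> b" "p \<notin> C a" "p \<in> C b"
  shows "\<exists>u. a < u \<and> u \<le> b \<and> \<sigma> u = p"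
  using assms(2-)
proof (induction b)
  case 0
  then show ?case by simp
next
  case (Suc b)
  then have "a \<le> b" by (metis le_SucE)
  show ?case
  proof (cases "p \<in> C b")
    case True
    then show ?thesis using Suc \<open>a \<le> b\<close> le_SucI by blast
  next
    case False
    then have "p = \<sigma> (Suc b)"
      using valid_run_step[OF assms(1) Suc.prems(1)] Suc.prems(4) by (cases "\<sigma> (Suc b) \<in> C b") auto
    then show ?thesis using \<open>a \<le> b\<close> by (intro exI[of _ "Suc b"]) auto
  qed
qed

lemma next_req_cong:
  assumes "\<And>s. s \<le> T \<Longrightarrow> \<sigma> s = p \<Longrightarrow> a < s \<longleftrightarrow> b < s"
  shows "next_req T \<sigma> a p = next_req T \<sigma> b p"
proof -
  have "(\<lambda>s. a < s \<and> s \<le> T \<and> \<sigma> s = p) = (\<lambda>s. b < s \<and> s \<le> T \<and> \<sigma> s = p)"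
    using assms by blast
  then show ?thesis unfolding next_req_def by (simp only:)
qed

lemma next_req_gt:
  assumes "t \<le> T"
  shows "t < next_req T \<sigma> t p"
proof (cases "\<exists>s. t < s \<and> s \<le> T \<and> \<sigma> s = p")
  case True
  then have "t < (LEAST s. t < s \<and> s \<le> T \<and> \<sigma> s = p)" by (metis (mono_tags, lifting) LeastI_ex)
  then show ?thesis by (simp only: next_req_def if_P[OF True])
next
  case False
  then show ?thesis using assms by (simp only: next_req_def if_not_P[OF False]) simp
qed

lemma next_req_Suc:
  assumes "\<sigma> (Suc t) \<noteq> p"
  shows "next_req T \<sigma> (Suc t) p = next_req T \<sigma> t p"
proof (rule next_req_cong)
  fix s assume "\<sigma> s = p"
  then have "s \<noteq> Suc t" using assms by auto
  then show "Suc t < s \<longleftrightarrow> t < s" by auto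
qed

lemma next_req_current_request:
  assumes "Suc t \<le> T"
  shows "next_req T \<sigma> t (\<sigma> (Suc t)) = Suc t"
proof -
  have "(LEAST s. t < s \<and> s \<le> T \<and> \<sigma> s = \<sigma> (Suc t)) = Suc t"
    by (rule Least_equality) (use assms in auto)
  then show ?thesis using assms by (auto simp: next_req_def)
qed

lemma next_req_current_request_less:
  assumes "Suc t \<le> T" "p \<noteq> \<sigma> (Suc t)"
  shows "next_req T \<sigma> t (\<sigma> (Suc t)) < next_req T \<sigma> t p"
  using next_req_gt[OF assms(1), of \<sigma> p] next_req_Suc[of \<sigma> t p T] assms
  by (simp add: next_req_current_request)

lemma last_req_spec:
  assumes "p \<in> \<sigma> ` {1..t}"
  shows "1 \<le> last_req \<sigma> t p" "last_req \<sigma> t p \<le> t" "\<sigma> (last_req \<sigma> t p) = p"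
    and "\<And>u. u \<le> t \<Longrightarrow> \<sigma> u = p \<Longrightarrow> 1 \<le> u \<Longrightarrow> u \<le> last_req \<sigma> t p"
proof -
  let ?R = "{t'. 1 \<le> t' \<and> t' \<le> t \<and> \<sigma> t' = p}"
  have fin: "finite ?R" by (rule finite_subset[of _ "{..t}"]) auto
  moreover have "?R \<noteq> {}" using assms by auto
  ultimately have "last_req \<sigma> t p \<in> ?R" unfolding last_req_def by (rule Max_in)
  then show "1 \<le> last_req \<sigma> t p" "last_req \<sigma> t p \<le> t" "\<sigma> (last_req \<sigma> t p) = p"
    by simp_all
  show "u \<le> last_req \<sigma> t p" if "u \<le> t" "\<sigma> u = p" "1 \<le> u" for u
    unfolding last_req_def by (rule Max_ge[OF fin]) (use that in simp)
qed

lemma nu_last_req: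
  assumes "p \<in> \<sigma> ` {1..t}"
  shows "nu T \<sigma> (last_req \<sigma> t p) = next_req T \<sigma> t p"
proof -
  have "next_req T \<sigma> (last_req \<sigma> t p) p = next_req T \<sigma> t p"
  proof (rule next_req_cong)
    fix s assume "\<sigma> s = p"
    then have "1 \<le> s \<Longrightarrow> s \<le> t \<Longrightarrow> s \<le> last_req \<sigma> t p" using last_req_spec(4)[OF assms] by blast
    then show "last_req \<sigma> t p < s \<longleftrightarrow> t < s"
      using last_req_spec(1,2)[OF assms] by linarith
  qed
  then show ?thesis unfolding nu_def using last_req_spec(3)[OF assms] by simp
qed

lemma valid_runs_step_cases:
  assumes VQ: "valid_run k T \<sigma> Q" and VB: "valid_run k T \<sigma> B" and t: "Suc t \<le> T"
    and same_card: "card (Q t) = card (B t)"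
  defines "r \<equiv> \<sigma> (Suc t)"
  obtains (insert) "r \<notin> Q t" "r \<notin> B t" "Q (Suc t) = insert r (Q t)" "B (Suc t) = insert r (B t)"
    | (replace) e f where "e \<in> Q t" "Q (Suc t) = insert r (Q t - {e})" "r \<in> Q t \<Longrightarrow> e = r"
        "f \<in> B t" "B (Suc t) = insert r (B t - {f})" "r \<in> B t \<Longrightarrow> f = r"
proof -
  have Qt: "Q t \<subseteq> \<sigma> ` {1..t}" "card (Q t) < k \<Longrightarrow> \<sigma> ` {1..t} \<subseteq> Q t"
    using valid_run_cache[OF VQ, of t] t by auto
  have Bt: "B t \<subseteq> \<sigma> ` {1..t}" "card (B t) < k \<Longrightarrow> \<sigma> ` {1..t} \<subseteq> B t"
    using valid_run_cache[OF VB, of t] t by auto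
  from VQ t show ?thesis
  proof (cases rule: valid_run_step_cases)
    case Q: insert
    then have "r \<notin> B t" using Qt(2) Bt(1) unfolding r_def by blast
    from VB t show ?thesis
    proof (cases rule: valid_run_step_cases)
      case insert
      then show ?thesis using Q that(1) by (simp add: r_def)
    qed (use Q same_card \<open>r \<notin> B t\<close> r_def in auto)
  next
    case Q: (replace e)
    from VB t show ?thesis
    proof (cases rule: valid_run_step_cases)
      case insert
      then have "r \<notin> Q t" using Qt(1) Bt(2) unfolding r_def by blast
      then show ?thesis using Q insert same_card by (simp add: r_def)
    next
      case (replace f)
      then show ?thesis using Q that(2)[of e f] by (simp add: r_def)
    qed
  qed
qed

definition early_eviction :: "nat \<Rightarrow> (nat \<Rightarrow> 'p) \<Rightarrow> (nat \<Rightarrow> 'p set) \<Rightarrow> nat \<Rightarrow> bool" where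
  "early_eviction T \<sigma> C s \<longleftrightarrow> (\<exists>e\<in>C (s - 1). e \<notin> C s \<and>
     (\<exists>q\<in>C (s - 1). next_req T \<sigma> (s - 1) e < next_req T \<sigma> (s - 1) q))"

lemma misses_inversions_step:
  fixes \<sigma> :: "nat \<Rightarrow> 'p"
  assumes VQ: "valid_run k T \<sigma> Q" and VB: "valid_run k T \<sigma> B" and t: "Suc t \<le> T"
    and g: "bij_betw g (Q t) (B t)"
  shows "\<exists>g'. bij_betw g' (Q (Suc t)) (B (Suc t)) \<and>
    of_bool (miss \<sigma> Q (Suc t)) + inversions g' (next_req T \<sigma> (Suc t)) (Q (Suc t))
      \<le> of_bool (miss \<sigma> B (Suc t)) + of_bool (early_eviction T \<sigma> Q (Suc t))
         + inversions g (next_req T \<sigma> t) (Q t)"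
proof -
  define r where "r = \<sigma> (Suc t)"
  define nx where "nx = next_req T \<sigma> t"
  define nx' where "nx' = next_req T \<sigma> (Suc t)"
  have nx': "nx' x = nx x" if "x \<noteq> r" for x
    using next_req_Suc[of \<sigma> t x T] that by (simp add: nx_def nx'_def r_def)
  have fin: "finite (Q t)" using valid_run_cache[OF VQ, of t] t by auto
  have miss: "miss \<sigma> C (Suc t) \<longleftrightarrow> r \<notin> C t" for C :: "nat \<Rightarrow> 'p set"
    by (simp add: miss_def r_def)
  from VQ VB t bij_betw_same_card[OF g] show ?thesis
  proof (cases rule: valid_runs_step_cases)
    case insert
    then have "bij_betw (g(r := r)) (Q (Suc t)) (B (Suc t))"
      using bij_betw_extend[OF g] by (simp add: r_def)
    moreover have "inversions (g(r := r)) nx' (insert r (Q t)) = inversions g nx (Q t)"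
      using insert g by (intro inversions_extend fin nx') (auto simp: r_def bij_betw_def)
    ultimately show ?thesis using insert unfolding miss nx_def nx'_def r_def by auto
  next
    case (replace e f)
    obtain g' q where g': "bij_betw g' (Q (Suc t)) (B (Suc t))" and q: "q \<in> Q t" "g q = f"
      and inv: "inversions g' nx' (Q (Suc t)) + of_bool (nx f < nx q)
                  \<le> inversions g nx (Q t) + of_bool (nx e < nx q)"
      by (rule inversions_repair[OF g fin, of e f r nx' nx]) (use replace nx' in \<open>auto simp: r_def\<close>)
    have "nx r < nx q" if "r \<notin> Q t"
      using next_req_current_request_less[where p=q and \<sigma>=\<sigma>, OF t] q(1) that by (auto simp: nx_def r_def)
    moreover have "early_eviction T \<sigma> Q (Suc t)" if "r \<notin> Q t" "nx e < nx q"
      unfolding early_eviction_def using replace q(1) that by (auto simp: nx_def r_def)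
    \<comment> \<open>a miss of Q at which B hits is paid for by the inversion at q, since r is requested first\<close>
    ultimately have "of_bool (r \<notin> Q t) + inversions g' nx' (Q (Suc t))
            \<le> of_bool (r \<notin> B t) + of_bool (early_eviction T \<sigma> Q (Suc t)) + inversions g nx (Q t)"
      using inv replace(3,6) unfolding r_def by (cases "r \<in> Q t"; cases "r \<in> B t"; cases "nx e < nx q")
        (auto simp: of_bool_def split: if_splits)
    with g' show ?thesis unfolding miss nx_def nx'_def by blast
  qed
qed

lemma misses_inversions_invariant:
  assumes VQ: "valid_run k T \<sigma> Q" and VB: "valid_run k T \<sigma> B"
  shows "t \<le> T \<Longrightarrow> \<exists>g. bij_betw g (Q t) (B t) \<and>
    num_misses t \<sigma> Q + inversions g (next_req T \<sigma> t) (Q t)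
      \<le> num_misses t \<sigma> B + card {s \<in> {1..t}. early_eviction T \<sigma> Q s}"
proof (induction t)
  case 0
  then show ?case using VQ VB
    by (intro exI[of _ id]) (simp add: valid_run_def num_misses_def inversions_def bij_betw_def)
next
  case (Suc t)
  then obtain g where "bij_betw g (Q t) (B t)"
    and IH: "num_misses t \<sigma> Q + inversions g (next_req T \<sigma> t) (Q t)
               \<le> num_misses t \<sigma> B + card {s \<in> {1..t}. early_eviction T \<sigma> Q s}"
    by auto
  with misses_inversions_step[OF VQ VB Suc.prems] show ?case
    unfolding num_misses_def card_filter_atLeastAtMost_Suc by fastforce
qed

corollary misses_le_misses_plus_early_evictions:
  assumes "valid_run k T \<sigma> Q" "valid_run k T \<sigma> B"
  shows "num_misses T \<sigma> Q \<le> num_misses T \<sigma> B + card {s \<in> {1..T}. early_eviction T \<sigma> Q s}"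
  using misses_inversions_invariant[OF assms order_refl] by auto

lemma last_req_evicted_less:
  assumes V: "valid_run k T \<sigma> C" and s: "1 \<le> s" "s < s'" "s' \<le> T"
    and p: "p \<in> C (s - 1)" "p \<notin> C s" "p \<in> C (s' - 1)"
  shows "last_req \<sigma> (s - 1) p < last_req \<sigma> (s' - 1) p"
proof -
  have "\<exists>u. s < u \<and> u \<le> s' - 1 \<and> \<sigma> u = p"
    by (rule valid_run_reenter[OF V]) (use s p in auto)
  then obtain u where u: "s < u" "u \<le> s' - 1" "\<sigma> u = p" by blast
  then have "u \<le> last_req \<sigma> (s' - 1) p"
    using last_req_spec(4)[of p \<sigma> "s' - 1" u] by auto
  moreover have "s - 1 \<le> T" using s by simp
  then have "p \<in> \<sigma> ` {1..s - 1}"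
    using valid_run_cache[OF V] p(1) by blast
  then have "last_req \<sigma> (s - 1) p \<le> s - 1" by (rule last_req_spec(2))
  ultimately show ?thesis using u(1) by linarith
qed

lemma eviction_edge_of_early_eviction:
  assumes V: "valid_run k T \<sigma> Q" and s: "1 \<le> s" "s \<le> T"
    and e: "e \<in> Q (s - 1)" "e \<notin> Q s" and w: "w \<in> Q (s - 1)"
    and later: "next_req T \<sigma> (s - 1) e < next_req T \<sigma> (s - 1) w"
  defines "j \<equiv> last_req \<sigma> (s - 1) e" and "i \<equiv> last_req \<sigma> (s - 1) w"
  shows "i \<in> {1..T}" "j \<in> {1..T}" "\<sigma> j = e"
    and "\<exists>t. t + 1 \<le> T \<and> \<sigma> j \<in> Q t \<and> \<sigma> j \<notin> Q (t + 1) \<and>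
           j \<in> cached_idx \<sigma> Q t \<and> i \<in> cached_idx \<sigma> Q t \<and> nu T \<sigma> j < nu T \<sigma> i"
proof -
  have "Q (s - 1) \<subseteq> \<sigma> ` {1..s - 1}" using valid_run_cache[OF V, of "s - 1"] s by auto
  then have req: "e \<in> \<sigma> ` {1..s - 1}" "w \<in> \<sigma> ` {1..s - 1}" using e w by auto
  show "i \<in> {1..T}" "j \<in> {1..T}" "\<sigma> j = e"
    unfolding i_def j_def using last_req_spec(1-3)[OF req(1)] last_req_spec(1-3)[OF req(2)] s by auto
  have "nu T \<sigma> j < nu T \<sigma> i"
    unfolding i_def j_def using req later by (simp add: nu_last_req)
  moreover have "j \<in> cached_idx \<sigma> Q (s - 1)" "i \<in> cached_idx \<sigma> Q (s - 1)"
    unfolding cached_idx_def i_def j_def using e w by auto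
  ultimately show "\<exists>t. t + 1 \<le> T \<and> \<sigma> j \<in> Q t \<and> \<sigma> j \<notin> Q (t + 1) \<and>
           j \<in> cached_idx \<sigma> Q t \<and> i \<in> cached_idx \<sigma> Q t \<and> nu T \<sigma> j < nu T \<sigma> i"
    using \<open>\<sigma> j = e\<close> e s by (intro exI[of _ "s - 1"]) simp
qed

lemma eviction_graph_of_early_evictions:
  assumes V: "valid_run k T \<sigma> Q"
  shows "\<exists>E. eviction_graph T \<sigma> Q E \<and> card E = card {s \<in> {1..T}. early_eviction T \<sigma> Q s}"
proof -
  define S where "S = {s \<in> {1..T}. early_eviction T \<sigma> Q s}"
  have "\<forall>s\<in>S. \<exists>e w. 1 \<le> s \<and> s \<le> T \<and> e \<in> Q (s - 1) \<and> e \<notin> Q s \<and> w \<in> Q (s - 1) \<and>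
                 next_req T \<sigma> (s - 1) e < next_req T \<sigma> (s - 1) w"
    by (auto simp: S_def early_eviction_def)
  then obtain ev wt where ew: "\<And>s. s \<in> S \<Longrightarrow> 1 \<le> s \<and> s \<le> T \<and> ev s \<in> Q (s - 1) \<and> ev s \<notin> Q s \<and>
      wt s \<in> Q (s - 1) \<and> next_req T \<sigma> (s - 1) (ev s) < next_req T \<sigma> (s - 1) (wt s)"
    by metis
  define j where "j s = last_req \<sigma> (s - 1) (ev s)" for s
  define i where "i s = last_req \<sigma> (s - 1) (wt s)" for s
  have edge: "i s \<in> {1..T}" "j s \<in> {1..T}" "\<sigma> (j s) = ev s"
    "\<exists>t. t + 1 \<le> T \<and> \<sigma> (j s) \<in> Q t \<and> \<sigma> (j s) \<notin> Q (t + 1) \<and>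
       j s \<in> cached_idx \<sigma> Q t \<and> i s \<in> cached_idx \<sigma> Q t \<and> nu T \<sigma> (j s) < nu T \<sigma> (i s)"
    if "s \<in> S" for s
    unfolding i_def j_def using eviction_edge_of_early_eviction[OF V] ew[OF that] by auto
  have "j s \<noteq> j s'" if "s \<in> S" "s' \<in> S" "s < s'" for s s'
  proof
    assume "j s = j s'"
    then have same: "ev s' = ev s" using edge(3) that by metis
    have "last_req \<sigma> (s - 1) (ev s) < last_req \<sigma> (s' - 1) (ev s)"
      by (rule last_req_evicted_less[OF V _ that(3)]) (use ew[OF that(1)] ew[OF that(2)] same in auto)
    then show False using \<open>j s = j s'\<close> same unfolding j_def by simp
  qed
  then have inj: "inj_on j S" by (metis inj_onI linorder_neqE_nat)
  define E where "E = (\<lambda>s. (i s, j s)) ` S"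
  have "card E = card S"
    unfolding E_def by (rule card_image) (use inj in \<open>auto simp: inj_on_def\<close>)
  moreover have "eviction_graph T \<sigma> Q E"
    unfolding eviction_graph_def E_def using edge inj by (fastforce dest: inj_onD)
  ultimately show ?thesis unfolding S_def by blast
qed

theorem mainTheorem5:
  fixes k T :: nat and \<sigma> :: "nat \<Rightarrow> 'p" and Q B :: "nat \<Rightarrow> 'p set"
  assumes "valid_run k T \<sigma> Q"
    and "belady_run k T \<sigma> B"
  shows "\<exists>E. eviction_graph T \<sigma> Q E \<and> num_misses T \<sigma> Q \<le> num_misses T \<sigma> B + card E"
proof -
  let ?early = "card {s \<in> {1..T}. early_eviction T \<sigma> Q s}"
  have "valid_run k T \<sigma> B" using assms(2) by (simp add: belady_run_def)
  with assms(1) have "num_misses T \<sigma> Q \<le> num_misses T \<sigma> B + ?early"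
    by (rule misses_le_misses_plus_early_evictions)
  moreover obtain E where "eviction_graph T \<sigma> Q E" "card E = ?early"
    using eviction_graph_of_early_evictions[OF assms(1)] by blast
  ultimately show ?thesis by auto
qed

end
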